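(* A topological space $X$ is locally dense-connected if and only if $X$ is (homeomorphic to) the topological sum of a family of dense-connected spaces.
   Context: A space $Y$ is dense-connected if every dense subset of $Y$ (with the subspace topology) is connected. A space $X$ is locally dense-connected if for every $x\in X$ and every neighborhood $U$ of $x$ there is a neighborhood $V$ of $x$ with $V\subset U$ such that $V$ is dense-connected. *)

theory Defs
  imports "HOL-Analysis.Analysis"
begin

definition dense_connected :: "'a topology \<Rightarrow> bool" where
  "dense_connected Y \<longleftrightarrow>
     (\<forall>D. D \<subseteq> topspace Y \<and> Y closure_of D = topspace Y \<longrightarrow> connected_space (subtopology Y D))"

definition nbhd_of :: "'a topology \<Rightarrow> 'a \<Rightarrow> 'a set \<Rightarrow> bool" where
  "nbhd_of X x N \<longleftrightarrow> N \<subseteq> topspace X \<and> (\<exists>W. openin X W \<and> x \<in> W \<and> W \<subseteq> N)"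

definition locally_dense_connected :: "'a topology \<Rightarrow> bool" where
  "locally_dense_connected X \<longleftrightarrow>
     (\<forall>x \<in> topspace X. \<forall>U. nbhd_of X x U \<longrightarrow>
        (\<exists>V. nbhd_of X x V \<and> V \<subseteq> U \<and> dense_connected (subtopology X V)))"

end

theory Submission
  imports Defs
begin

text \<open>A space is dense-connected exactly when any two nonempty open sets meet, i.e. when it is
  hyperconnected; this property passes to open subspaces and to unions of open hyperconnected sets
  through a common point. Hence in a locally dense-connected space the union of all open
  hyperconnected neighbourhoods of a point is open and hyperconnected, and these maximal sets
  partition the space into open pieces, so the space is their topological sum. Conversely, each
  summand of a sum of dense-connected spaces is an open hyperconnected set, and hyperconnected
  neighbourhoods are inherited by smaller open sets.\<close>

definition hyperconnected_space :: "'a topology \<Rightarrow> bool" where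
  "hyperconnected_space X \<longleftrightarrow>
     (\<forall>U V. openin X U \<and> openin X V \<and> U \<noteq> {} \<and> V \<noteq> {} \<longrightarrow> U \<inter> V \<noteq> {})"

lemma dense_connected_imp_hyperconnected_space:
  assumes "dense_connected X"
  shows "hyperconnected_space X"
  unfolding hyperconnected_space_def
proof (intro allI impI, elim conjE)
  fix A B
  assume A: "openin X A" and B: "openin X B" and "A \<noteq> {}" "B \<noteq> {}"
  show "A \<inter> B \<noteq> {}"
  proof
    assume disj: "A \<inter> B = {}"
    define C where "C = X closure_of (A \<union> B)"
    define E where "E = topspace X - C"
    \<comment> \<open>\<open>D\<close> is dense but split by the disjoint open sets \<open>A\<close> and \<open>B \<union> E\<close>.\<close>
    define D where "D = A \<union> B \<union> E"
    have AB_sub: "A \<union> B \<subseteq> topspace X"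
      using openin_subset[OF A] openin_subset[OF B] by blast
    have "A \<union> B \<subseteq> C"
      unfolding C_def using AB_sub by (rule closure_of_subset)
    have D_sub: "D \<subseteq> topspace X"
      unfolding D_def E_def using AB_sub by blast
    have "C \<subseteq> X closure_of D"
      unfolding C_def D_def by (rule closure_of_mono) blast
    moreover have "E \<subseteq> X closure_of D"
      using closure_of_subset[OF D_sub] unfolding D_def by blast
    ultimately have "X closure_of D = topspace X"
      using closure_of_subset_topspace[of X D] unfolding E_def by blast
    with assms D_sub have "connectedin X D"
      by (simp add: dense_connected_def connectedin_def)
    moreover have "openin X (B \<union> E)"
      unfolding E_def C_def using B by (intro openin_Un openin_diff) auto
    moreover have "A \<inter> (B \<union> E) \<inter> D = {}"
      using \<open>A \<union> B \<subseteq> C\<close> disj unfolding E_def by blast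
    moreover have "D \<subseteq> A \<union> (B \<union> E)" "A \<inter> D \<noteq> {}" "(B \<union> E) \<inter> D \<noteq> {}"
      using \<open>A \<noteq> {}\<close> \<open>B \<noteq> {}\<close> unfolding D_def by auto
    ultimately show False
      using A unfolding connectedin by blast
  qed
qed

lemma hyperconnected_space_imp_dense_connected:
  assumes "hyperconnected_space X"
  shows "dense_connected X"
  unfolding dense_connected_def
proof (intro allI impI, elim conjE)
  fix D assume D_sub: "D \<subseteq> topspace X" and dense: "X closure_of D = topspace X"
  have "connectedin X D"
    unfolding connectedin
  proof (intro conjI D_sub notI, elim exE conjE)
    fix E1 E2 assume "openin X E1" "openin X E2" "D \<subseteq> E1 \<union> E2"
      and disj: "E1 \<inter> E2 \<inter> D = {}" and "E1 \<inter> D \<noteq> {}" "E2 \<inter> D \<noteq> {}"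
    then have "openin X (E1 \<inter> E2)" "E1 \<inter> E2 \<noteq> {}"
      using assms unfolding hyperconnected_space_def by blast+
    then have "D \<inter> (E1 \<inter> E2) \<noteq> {}"
      using dense unfolding dense_intersects_open by blast
    with disj show False by blast
  qed
  then show "connected_space (subtopology X D)"
    by (simp add: connectedin_def)
qed

lemma dense_connected_iff_hyperconnected_space:
  "dense_connected X \<longleftrightarrow> hyperconnected_space X"
  using dense_connected_imp_hyperconnected_space hyperconnected_space_imp_dense_connected by blast

lemma hyperconnected_space_open_subtopology_iff:
  assumes "openin X V"
  shows "hyperconnected_space (subtopology X V) \<longleftrightarrow>
           (\<forall>P Q. openin X P \<and> openin X Q \<and> P \<subseteq> V \<and> Q \<subseteq> V \<and> P \<noteq> {} \<and> Q \<noteq> {}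
              \<longrightarrow> P \<inter> Q \<noteq> {})"
  by (simp add: hyperconnected_space_def openin_open_subtopology[OF assms]) blast

lemma hyperconnected_space_open_subtopology:
  assumes "hyperconnected_space X" "openin X W"
  shows "hyperconnected_space (subtopology X W)"
  using assms by (simp add: hyperconnected_space_def openin_open_subtopology)

lemma hyperconnected_space_Union:
  assumes "\<And>A. A \<in> \<F> \<Longrightarrow> openin X A \<and> x \<in> A \<and> hyperconnected_space (subtopology X A)"
  shows "hyperconnected_space (subtopology X (\<Union>\<F>))"
proof -
  have hyp: "P \<inter> Q \<noteq> {}"
    if "A \<in> \<F>" "openin X P" "openin X Q" "P \<subseteq> A" "Q \<subseteq> A" "P \<noteq> {}" "Q \<noteq> {}" for A P Q
  proof -
    have "openin X A" "hyperconnected_space (subtopology X A)"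
      using assms[OF that(1)] by auto
    then show ?thesis
      using that(2-) by (simp add: hyperconnected_space_open_subtopology_iff)
  qed
  have "P \<inter> Q \<noteq> {}"
    if P: "openin X P" "P \<subseteq> \<Union>\<F>" "P \<noteq> {}" and Q: "openin X Q" "Q \<subseteq> \<Union>\<F>" "Q \<noteq> {}" for P Q
  proof -
    obtain A B where A: "A \<in> \<F>" "P \<inter> A \<noteq> {}" and B: "B \<in> \<F>" "Q \<inter> B \<noteq> {}"
      using P Q by blast
    have "openin X A" "openin X B" "x \<in> A \<inter> B"
      using A(1) B(1) assms by auto
    \<comment> \<open>\<open>P\<close> meets \<open>A \<inter> B\<close> inside \<open>A\<close>, and then meets \<open>Q\<close> inside \<open>B\<close>.\<close>
    then have "(P \<inter> A) \<inter> (A \<inter> B) \<noteq> {}"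
      using A P(1) by (intro hyp[OF A(1), of "P \<inter> A" "A \<inter> B"] openin_Int) auto
    then have "(P \<inter> B) \<inter> (Q \<inter> B) \<noteq> {}"
      using B P(1) Q(1) \<open>openin X B\<close> by (intro hyp[OF B(1), of "P \<inter> B" "Q \<inter> B"] openin_Int) auto
    then show ?thesis by blast
  qed
  moreover have "openin X (\<Union>\<F>)"
    using assms by blast
  ultimately show ?thesis
    by (simp add: hyperconnected_space_open_subtopology_iff)
qed

lemma hyperconnected_space_continuous_image:
  assumes f: "continuous_map X Y f" "f ` topspace X = topspace Y" and "hyperconnected_space X"
  shows "hyperconnected_space Y"
  unfolding hyperconnected_space_def
proof (intro allI impI, elim conjE)
  fix U V assume "openin Y U" "openin Y V" "U \<noteq> {}" "V \<noteq> {}"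
  have preimage: "openin X {x \<in> topspace X. f x \<in> W} \<and> {x \<in> topspace X. f x \<in> W} \<noteq> {}"
    if W: "openin Y W" "W \<noteq> {}" for W
  proof
    show "openin X {x \<in> topspace X. f x \<in> W}"
      using f(1) W(1) by (rule openin_continuous_map_preimage)
    obtain y where "y \<in> W"
      using W(2) by blast
    moreover have "y \<in> f ` topspace X"
      using \<open>y \<in> W\<close> openin_subset[OF W(1)] f(2) by auto
    ultimately show "{x \<in> topspace X. f x \<in> W} \<noteq> {}"
      by blast
  qed
  have "{x \<in> topspace X. f x \<in> U} \<inter> {x \<in> topspace X. f x \<in> V} \<noteq> {}"
    using assms(3) preimage[OF \<open>openin Y U\<close> \<open>U \<noteq> {}\<close>] preimage[OF \<open>openin Y V\<close> \<open>V \<noteq> {}\<close>]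
    unfolding hyperconnected_space_def by (elim conjE allE impE) (intro conjI)
  then show "U \<inter> V \<noteq> {}"
    by blast
qed

lemma homeomorphic_map_hyperconnected_space:
  assumes "homeomorphic_map X Y f" "hyperconnected_space X"
  shows "hyperconnected_space Y"
  using homeomorphic_imp_continuous_map[OF assms(1)] homeomorphic_imp_surjective_map[OF assms(1)]
    assms(2) by (rule hyperconnected_space_continuous_image)

lemma homeomorphic_hyperconnected_space:
  assumes "X homeomorphic_space Y"
  shows "hyperconnected_space X \<longleftrightarrow> hyperconnected_space Y"
proof -
  obtain f where "homeomorphic_map X Y f"
    using assms unfolding homeomorphic_space by blast
  moreover obtain g where "homeomorphic_map Y X g"
    using homeomorphic_space_sym[THEN iffD1, OF assms] unfolding homeomorphic_space by blast
  ultimately show ?thesis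
    by (meson homeomorphic_map_hyperconnected_space)
qed

lemma locally_dense_connected_iff_hyperconnected_nbhds:
  "locally_dense_connected X \<longleftrightarrow>
     (\<forall>x \<in> topspace X. \<exists>V. openin X V \<and> x \<in> V \<and> hyperconnected_space (subtopology X V))"
proof (intro iffI ballI)
  fix x assume L: "locally_dense_connected X" and x: "x \<in> topspace X"
  have "nbhd_of X x (topspace X)"
    unfolding nbhd_of_def using x by blast
  then obtain N where "nbhd_of X x N" and dc: "dense_connected (subtopology X N)"
    using L x unfolding locally_dense_connected_def by blast
  then obtain V where V: "openin X V" "x \<in> V" "V \<subseteq> N"
    unfolding nbhd_of_def by blast
  have "openin (subtopology X N) V"
    using openin_subtopology_Int[OF V(1), of N] V(3) by (simp add: Int_absorb2)
  then have "hyperconnected_space (subtopology (subtopology X N) V)"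
    using dc by (simp add: dense_connected_iff_hyperconnected_space hyperconnected_space_open_subtopology)
  then show "\<exists>V. openin X V \<and> x \<in> V \<and> hyperconnected_space (subtopology X V)"
    using V by (auto simp: subtopology_subtopology Int_absorb1)
next
  assume H: "\<forall>x \<in> topspace X. \<exists>V. openin X V \<and> x \<in> V \<and> hyperconnected_space (subtopology X V)"
  show "locally_dense_connected X"
    unfolding locally_dense_connected_def
  proof (intro ballI allI impI)
    fix x U assume x: "x \<in> topspace X" and "nbhd_of X x U"
    then obtain W where W: "openin X W" "x \<in> W" "W \<subseteq> U"
      unfolding nbhd_of_def by blast
    obtain V where V: "openin X V" "x \<in> V" and hc: "hyperconnected_space (subtopology X V)"
      using H x by blast
    have "openin (subtopology X V) (V \<inter> W)"
      using W(1) by (simp add: openin_subtopology_Int2)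
    from hyperconnected_space_open_subtopology[OF hc this]
    have "hyperconnected_space (subtopology X (V \<inter> W))"
      by (simp add: subtopology_subtopology)
    moreover have "nbhd_of X x (V \<inter> W)"
      unfolding nbhd_of_def using V W openin_subset[OF V(1)] by blast
    ultimately show "\<exists>V'. nbhd_of X x V' \<and> V' \<subseteq> U \<and> dense_connected (subtopology X V')"
      using W(3) dense_connected_iff_hyperconnected_space by blast
  qed
qed

lemma locally_dense_connected_sum_topology:
  assumes "\<forall>i \<in> I. dense_connected (T i)"
  shows "locally_dense_connected (sum_topology T I)"
  unfolding locally_dense_connected_iff_hyperconnected_nbhds
proof
  fix p assume "p \<in> topspace (sum_topology T I)"
  then obtain i y where p: "p = (i, y)" "i \<in> I" "y \<in> topspace (T i)"
    by auto
  define V where "V = Pair i ` topspace (T i)"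
  have "openin (sum_topology T I) V"
    using open_map_component_injection[OF p(2)] unfolding open_map_def V_def by blast
  moreover have "T i homeomorphic_space subtopology (sum_topology T I) V"
    unfolding V_def
    by (rule embedding_map_imp_homeomorphic_space[OF embedding_map_component_injection[OF p(2)]])
  then have "hyperconnected_space (subtopology (sum_topology T I) V)"
    using assms p(2) dense_connected_iff_hyperconnected_space homeomorphic_hyperconnected_space by blast
  ultimately show "\<exists>V. openin (sum_topology T I) V \<and> p \<in> V \<and> hyperconnected_space (subtopology (sum_topology T I) V)"
    using p unfolding V_def by blast
qed

lemma homeomorphic_locally_dense_connected:
  assumes "X homeomorphic_space Y" "locally_dense_connected Y"
  shows "locally_dense_connected X"
  unfolding locally_dense_connected_iff_hyperconnected_nbhds
proof
  fix x assume x: "x \<in> topspace X"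
  obtain f where f: "homeomorphic_map X Y f"
    using assms(1) unfolding homeomorphic_space by blast
  have "f x \<in> topspace Y"
    using x homeomorphic_imp_surjective_map[OF f] by blast
  then obtain V where V: "openin Y V" "f x \<in> V" and hc: "hyperconnected_space (subtopology Y V)"
    using assms(2) unfolding locally_dense_connected_iff_hyperconnected_nbhds by blast
  define W where "W = {z \<in> topspace X. f z \<in> V}"
  have "openin X W"
    unfolding W_def using homeomorphic_imp_continuous_map[OF f] V(1)
    by (rule openin_continuous_map_preimage)
  moreover have "homeomorphic_map (subtopology X W) (subtopology Y V) f"
    using f by (rule homeomorphic_map_subtopologies_alt) (simp add: W_def)
  then have "hyperconnected_space (subtopology X W)"
    using hc homeomorphic_hyperconnected_space homeomorphic_map_imp_homeomorphic_space by blast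
  ultimately show "\<exists>W. openin X W \<and> x \<in> W \<and> hyperconnected_space (subtopology X W)"
    using x V(2) unfolding W_def by blast
qed

lemma homeomorphic_space_sum_topology_open_partition:
  assumes opn: "\<And>S. S \<in> \<P> \<Longrightarrow> openin X S" and cover: "\<Union>\<P> = topspace X"
    and disj: "pairwise disjnt \<P>"
  shows "X homeomorphic_space sum_topology (subtopology X) \<P>"
proof -
  let ?S = "sum_topology (subtopology X) \<P>"
  have top: "topspace ?S = Sigma \<P> (\<lambda>S. S)"
    using cover by auto
  have "homeomorphic_map ?S X snd"
  proof (rule bijective_open_imp_homeomorphic_map)
    show "continuous_map ?S X snd"
      unfolding continuous_map_def
    proof (intro conjI allI impI)
      show "snd \<in> topspace ?S \<rightarrow> topspace X"
        using cover unfolding top by auto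
      fix U assume "openin X U"
      show "openin ?S {p \<in> topspace ?S. snd p \<in> U}"
        unfolding openin_sum_topology
      proof (intro conjI ballI)
        show "{p \<in> topspace ?S. snd p \<in> U} \<subseteq> Sigma \<P> (topspace \<circ> subtopology X)"
          by auto
        fix S assume "S \<in> \<P>"
        then have "{x. (S, x) \<in> {p \<in> topspace ?S. snd p \<in> U}} = S \<inter> U"
          unfolding top by auto
        then show "openin (subtopology X S) {x. (S, x) \<in> {p \<in> topspace ?S. snd p \<in> U}}"
          using \<open>openin X U\<close> by (simp add: openin_subtopology_Int2)
      qed
    qed
    show "open_map ?S X snd"
      unfolding open_map_def
    proof (intro allI impI)
      fix U assume "openin ?S U"
      then obtain T where U: "U = Sigma \<P> T" and T: "\<And>S. S \<in> \<P> \<Longrightarrow> openin (subtopology X S) (T S)"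
        unfolding openin_sum_topology_alt by blast
      have "openin X (T S)" if "S \<in> \<P>" for S
        using T[OF that] opn[OF that] by (simp add: openin_open_subtopology)
      then show "openin X (snd ` U)"
        unfolding U snd_image_Sigma by blast
    qed
    show "snd ` topspace ?S = topspace X"
      unfolding top snd_image_Sigma using cover by simp
    show "inj_on snd (topspace ?S)"
    proof (rule inj_onI)
      fix p q assume "p \<in> topspace ?S" "q \<in> topspace ?S" "snd p = snd q"
      then have "fst p \<in> \<P>" "fst q \<in> \<P>" "snd p \<in> fst p \<inter> fst q"
        unfolding top by auto
      then have "fst p = fst q"
        using disj unfolding pairwise_def disjnt_def by blast
      with \<open>snd p = snd q\<close> show "p = q"
        by (simp add: prod_eq_iff)
    qed
  qed
  then show ?thesis
    using homeomorphic_space_sym homeomorphic_map_imp_homeomorphic_space by metis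
qed

text \<open>Empty when \<open>x\<close> has no open hyperconnected neighbourhood.\<close>
definition hyperconnected_component_of :: "'a topology \<Rightarrow> 'a \<Rightarrow> 'a set" where
  "hyperconnected_component_of X x =
     \<Union>{V. openin X V \<and> x \<in> V \<and> hyperconnected_space (subtopology X V)}"

lemma openin_hyperconnected_component_of: "openin X (hyperconnected_component_of X x)"
  unfolding hyperconnected_component_of_def by (rule openin_Union) blast

lemma hyperconnected_space_hyperconnected_component_of:
  "hyperconnected_space (subtopology X (hyperconnected_component_of X x))"
  unfolding hyperconnected_component_of_def by (rule hyperconnected_space_Union) blast

lemma hyperconnected_component_of_maximal:
  "\<lbrakk>openin X V; x \<in> V; hyperconnected_space (subtopology X V)\<rbrakk>
     \<Longrightarrow> V \<subseteq> hyperconnected_component_of X x"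
  unfolding hyperconnected_component_of_def by blast

lemma hyperconnected_component_of_eq:
  assumes "y \<in> hyperconnected_component_of X x"
  shows "hyperconnected_component_of X y = hyperconnected_component_of X x"
proof -
  let ?C = "hyperconnected_component_of X"
  have "x \<in> ?C x"
    using assms unfolding hyperconnected_component_of_def by blast
  have "?C x \<subseteq> ?C y"
    using openin_hyperconnected_component_of assms hyperconnected_space_hyperconnected_component_of
    by (rule hyperconnected_component_of_maximal)
  then have "y \<in> ?C y"
    using assms by blast
  have "hyperconnected_space (subtopology X (\<Union>{?C x, ?C y}))"
    using \<open>y \<in> ?C y\<close> assms
    by (intro hyperconnected_space_Union[where x = y])
       (auto simp: openin_hyperconnected_component_of hyperconnected_space_hyperconnected_component_of)
  then have "?C x \<union> ?C y \<subseteq> ?C x"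
    using \<open>x \<in> ?C x\<close>
    by (intro hyperconnected_component_of_maximal) (auto simp: openin_hyperconnected_component_of)
  with \<open>?C x \<subseteq> ?C y\<close> show ?thesis
    by blast
qed

lemma locally_dense_connected_imp_homeomorphic_sum_topology:
  assumes "locally_dense_connected X"
  shows "X homeomorphic_space
           sum_topology (subtopology X) (hyperconnected_component_of X ` topspace X)"
proof (rule homeomorphic_space_sum_topology_open_partition)
  let ?C = "hyperconnected_component_of X"
  show "openin X S" if "S \<in> ?C ` topspace X" for S
    using that by (auto simp: openin_hyperconnected_component_of)
  have self: "x \<in> ?C x" if "x \<in> topspace X" for x
  proof -
    have "\<exists>V. openin X V \<and> x \<in> V \<and> hyperconnected_space (subtopology X V)"
      using assms that by (simp add: locally_dense_connected_iff_hyperconnected_nbhds)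
    then obtain V where "openin X V" "x \<in> V" "hyperconnected_space (subtopology X V)"
      by blast
    from hyperconnected_component_of_maximal[OF this] \<open>x \<in> V\<close> show ?thesis
      by blast
  qed
  show "\<Union>(?C ` topspace X) = topspace X"
  proof
    show "\<Union>(?C ` topspace X) \<subseteq> topspace X"
      by (rule UN_least) (rule openin_subset[OF openin_hyperconnected_component_of])
    show "topspace X \<subseteq> \<Union>(?C ` topspace X)"
      using self by blast
  qed
  show "pairwise disjnt (?C ` topspace X)"
  proof (rule pairwiseI)
    fix S S' assume "S \<in> ?C ` topspace X" "S' \<in> ?C ` topspace X" "S \<noteq> S'"
    then obtain x x' where "S = ?C x" "S' = ?C x'"
      by blast
    show "disjnt S S'"
    proof (rule ccontr)
      assume "\<not> disjnt S S'"
      then obtain z where "z \<in> ?C x" "z \<in> ?C x'"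
        unfolding \<open>S = ?C x\<close> \<open>S' = ?C x'\<close> disjnt_def by blast
      then have "?C x = ?C x'"
        using hyperconnected_component_of_eq[of z X x] hyperconnected_component_of_eq[of z X x']
        by simp
      with \<open>S = ?C x\<close> \<open>S' = ?C x'\<close> \<open>S \<noteq> S'\<close> show False
        by simp
    qed
  qed
qed

theorem theorem4p17:
  fixes X :: "'a topology"
  shows "(\<forall>(I :: 'i set) (T :: 'i \<Rightarrow> 'b topology).
            (\<forall>i \<in> I. dense_connected (T i)) \<and> X homeomorphic_space sum_topology T I
            \<longrightarrow> locally_dense_connected X)
       \<and> (locally_dense_connected X \<longrightarrow>
            (\<exists>(I :: 'a set set) (T :: 'a set \<Rightarrow> 'a topology).
               (\<forall>i \<in> I. dense_connected (T i)) \<and> X homeomorphic_space sum_topology T I))"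
proof (intro conjI allI impI)
  fix I :: "'i set" and T :: "'i \<Rightarrow> 'b topology"
  assume "(\<forall>i \<in> I. dense_connected (T i)) \<and> X homeomorphic_space sum_topology T I"
  then show "locally_dense_connected X"
    using homeomorphic_locally_dense_connected locally_dense_connected_sum_topology by blast
next
  assume "locally_dense_connected X"
  then have "X homeomorphic_space
               sum_topology (subtopology X) (hyperconnected_component_of X ` topspace X)"
    by (rule locally_dense_connected_imp_homeomorphic_sum_topology)
  moreover have "\<forall>S \<in> hyperconnected_component_of X ` topspace X. dense_connected (subtopology X S)"
    by (auto simp: dense_connected_iff_hyperconnected_space
        hyperconnected_space_hyperconnected_component_of)
  ultimately show "\<exists>(I :: 'a set set) (T :: 'a set \<Rightarrow> 'a topology).
      (\<forall>i \<in> I. dense_connected (T i)) \<and> X homeomorphic_space sum_topology T I"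
    by blast
qed

end
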